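(* Let $V$ be the vector module of $gl(m|n)$ and $V(\Lambda)$ a finite-dimensional irreducible $gl(m|n)$-module with maximal $\mathbb{Z}$-graded component $V_0(\Lambda)$. Then $V\otimes V(\Lambda)$ is cyclically generated as an $L$-module by the $L_0$-submodule $V\otimes V_0(\Lambda)$, and $V\otimes V(\Lambda)=U(L_-)\,\big(V\otimes V_0(\Lambda)\big)$.
   Context: $L=gl(m|n)$ over $\mathbb{C}$, with homogeneous basis $E_{pq}$ ($1\le p,q\le m+n$), parity $(p)+(q)$ where $(p)=0$ for $p\le m$, $(p)=1$ otherwise, and graded bracket $[E_{pq},E_{rs}]=\delta_{qr}E_{ps}-(-1)^{((p)+(q))((r)+(s))}\delta_{ps}E_{rq}$. $L$ has the $\mathbb{Z}$-grading $L=L_-\oplus L_0\oplus L_+$ with $L_0=gl(m)\oplus gl(n)$ the even part, $L_+=\mathrm{span}\{E_{pq}:p\le m<q\}$, $L_-=\mathrm{span}\{E_{qp}:p\le m<q\}$. The vector module $V$ has basis $|s\rangle$ with $E_{pq}|s\rangle=\delta_{qs}|p\rangle$, and $L$ acts on tensor products via the coproduct $\Delta(x)=x\otimes1+1\otimes x$ with the usual sign rule. The maximal $\mathbb{Z}$-graded component $V_0(\Lambda)$ of $V(\Lambda)$ is the irreducible $L_0$-submodule generated by the highest weight vector (it is annihilated by $L_+$). *)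

theory Defs
  imports Complex_Main "HOL-Library.Function_Algebras"
begin

text \<open>Indices p,q of the basis E_pq of gl(m|n) range over 1..m+n.
 A gl(m|n)-module is given by a complex vector space (the whole type 'w with scalar
 multiplication sc), a Z2-grading W0 (+) W1, and operators rho p q (action of E_pq).\<close>

definition par :: "nat \<Rightarrow> nat \<Rightarrow> nat" where
  "par m p = (if p \<le> m then 0 else 1)"

definition sgn_c :: "nat \<Rightarrow> complex" where
  "sgn_c k = (-1) ^ k"

definition idx :: "nat \<Rightarrow> nat \<Rightarrow> nat set" where
  "idx m n = {1..m+n}"

text \<open>Smallest subspace containing S and closed under the operators in ops;
 for ops spanning a subalgebra K of L this is U(K) S.\<close>
inductive_set gen_sub :: "(complex \<Rightarrow> 'a::ab_group_add \<Rightarrow> 'a) \<Rightarrow> ('a \<Rightarrow> 'a) set \<Rightarrow> 'a set \<Rightarrow> 'a set"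
  for sc :: "complex \<Rightarrow> 'a \<Rightarrow> 'a" and ops :: "('a \<Rightarrow> 'a) set" and S :: "'a set" where
  base: "x \<in> S \<Longrightarrow> x \<in> gen_sub sc ops S"
| zero: "0 \<in> gen_sub sc ops S"
| add: "x \<in> gen_sub sc ops S \<Longrightarrow> y \<in> gen_sub sc ops S \<Longrightarrow> x + y \<in> gen_sub sc ops S"
| smul: "x \<in> gen_sub sc ops S \<Longrightarrow> sc c x \<in> gen_sub sc ops S"
| oper: "f \<in> ops \<Longrightarrow> x \<in> gen_sub sc ops S \<Longrightarrow> f x \<in> gen_sub sc ops S"

definition glmn_module ::
  "nat \<Rightarrow> nat \<Rightarrow> (complex \<Rightarrow> 'w::ab_group_add \<Rightarrow> 'w) \<Rightarrow> (nat \<Rightarrow> nat \<Rightarrow> 'w \<Rightarrow> 'w) \<Rightarrow> 'w set \<Rightarrow> 'w set \<Rightarrow> bool" where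
  "glmn_module m n sc rho W0 W1 \<longleftrightarrow>
     vector_space sc \<and>
     module.subspace sc W0 \<and> module.subspace sc W1 \<and> W0 \<inter> W1 = {0} \<and>
     (\<forall>w. \<exists>a\<in>W0. \<exists>b\<in>W1. w = a + b) \<and>
     (\<forall>p\<in>idx m n. \<forall>q\<in>idx m n. Vector_Spaces.linear sc sc (rho p q)) \<and>
     (\<forall>p\<in>idx m n. \<forall>q\<in>idx m n.
        (if par m p = par m q then rho p q ` W0 \<subseteq> W0 \<and> rho p q ` W1 \<subseteq> W1
         else rho p q ` W0 \<subseteq> W1 \<and> rho p q ` W1 \<subseteq> W0)) \<and>
     (\<forall>p\<in>idx m n. \<forall>q\<in>idx m n. \<forall>r\<in>idx m n. \<forall>s\<in>idx m n. \<forall>w.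
        rho p q (rho r s w)
          - sc (sgn_c ((par m p + par m q) * (par m r + par m s))) (rho r s (rho p q w))
        = (if q = r then rho p s w else 0)
          - sc (sgn_c ((par m p + par m q) * (par m r + par m s)))
               (if p = s then rho r q w else 0))"

definition fin_dim :: "(complex \<Rightarrow> 'w::ab_group_add \<Rightarrow> 'w) \<Rightarrow> bool" where
  "fin_dim sc \<longleftrightarrow> (\<exists>B. finite B \<and> module.span sc B = UNIV)"

definition glmn_irreducible ::
  "nat \<Rightarrow> nat \<Rightarrow> (complex \<Rightarrow> 'w::ab_group_add \<Rightarrow> 'w) \<Rightarrow> (nat \<Rightarrow> nat \<Rightarrow> 'w \<Rightarrow> 'w) \<Rightarrow> 'w set \<Rightarrow> 'w set \<Rightarrow> bool" where
  "glmn_irreducible m n sc rho W0 W1 \<longleftrightarrow>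
     (UNIV :: 'w set) \<noteq> {0} \<and>
     (\<forall>S. module.subspace sc S \<and> (\<forall>p\<in>idx m n. \<forall>q\<in>idx m n. rho p q ` S \<subseteq> S) \<and>
          (\<forall>w\<in>S. \<exists>a\<in>S \<inter> W0. \<exists>b\<in>S \<inter> W1. w = a + b)
          \<longrightarrow> S = {0} \<or> S = UNIV)"

definition hw_vector ::
  "nat \<Rightarrow> nat \<Rightarrow> (complex \<Rightarrow> 'w::ab_group_add \<Rightarrow> 'w) \<Rightarrow> (nat \<Rightarrow> nat \<Rightarrow> 'w \<Rightarrow> 'w) \<Rightarrow> (nat \<Rightarrow> complex) \<Rightarrow> 'w \<Rightarrow> bool" where
  "hw_vector m n sc rho Lam v \<longleftrightarrow>
     v \<noteq> 0 \<and> (\<forall>p\<in>idx m n. rho p p v = sc (Lam p) v) \<and>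
     (\<forall>p\<in>idx m n. \<forall>q\<in>idx m n. p < q \<longrightarrow> rho p q v = 0)"

definition L0_ops :: "nat \<Rightarrow> nat \<Rightarrow> (nat \<Rightarrow> nat \<Rightarrow> 'a \<Rightarrow> 'a) \<Rightarrow> ('a \<Rightarrow> 'a) set" where
  "L0_ops m n act = {act p q | p q. p \<in> idx m n \<and> q \<in> idx m n \<and> par m p = par m q}"

definition Lminus_ops :: "nat \<Rightarrow> nat \<Rightarrow> (nat \<Rightarrow> nat \<Rightarrow> 'a \<Rightarrow> 'a) \<Rightarrow> ('a \<Rightarrow> 'a) set" where
  "Lminus_ops m n act = {act q p | p q. 1 \<le> p \<and> p \<le> m \<and> m < q \<and> q \<le> m + n}"

definition L_ops :: "nat \<Rightarrow> nat \<Rightarrow> (nat \<Rightarrow> nat \<Rightarrow> 'a \<Rightarrow> 'a) \<Rightarrow> ('a \<Rightarrow> 'a) set" where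
  "L_ops m n act = {act p q | p q. p \<in> idx m n \<and> q \<in> idx m n}"

definition V0 :: "nat \<Rightarrow> nat \<Rightarrow> (complex \<Rightarrow> 'w::ab_group_add \<Rightarrow> 'w) \<Rightarrow> (nat \<Rightarrow> nat \<Rightarrow> 'w \<Rightarrow> 'w) \<Rightarrow> 'w \<Rightarrow> 'w set" where
  "V0 m n sc rho v = gen_sub sc (L0_ops m n rho) {v}"

text \<open>Tensor product V \<otimes> W with V the vector module (basis |s>, s = 1..m+n):
 an element sum_s |s> \<otimes> t s is represented by the function t (zero outside 1..m+n).\<close>
definition tensor_space :: "nat \<Rightarrow> nat \<Rightarrow> (nat \<Rightarrow> 'w::zero) set" where
  "tensor_space m n = {t. \<forall>r. r \<notin> idx m n \<longrightarrow> t r = 0}"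

definition tens_sc :: "(complex \<Rightarrow> 'w \<Rightarrow> 'w) \<Rightarrow> complex \<Rightarrow> (nat \<Rightarrow> 'w) \<Rightarrow> (nat \<Rightarrow> 'w)" where
  "tens_sc sc c t = (\<lambda>r. sc c (t r))"

text \<open>Coproduct action with sign rule:
 E_pq (|s> \<otimes> w) = delta_qs |p> \<otimes> w + (-1)^(((p)+(q))(s)) |s> \<otimes> E_pq w.\<close>
definition tens_act ::
  "nat \<Rightarrow> nat \<Rightarrow> (complex \<Rightarrow> 'w::ab_group_add \<Rightarrow> 'w) \<Rightarrow> (nat \<Rightarrow> nat \<Rightarrow> 'w \<Rightarrow> 'w) \<Rightarrow> nat \<Rightarrow> nat \<Rightarrow> (nat \<Rightarrow> 'w) \<Rightarrow> (nat \<Rightarrow> 'w)" where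
  "tens_act m n sc rho p q t = (\<lambda>r. if r \<in> idx m n then
       (if r = p then t q else 0) + sc (sgn_c ((par m p + par m q) * par m r)) (rho p q (t r))
     else 0)"

definition tensor_V0 :: "nat \<Rightarrow> nat \<Rightarrow> (complex \<Rightarrow> 'w::ab_group_add \<Rightarrow> 'w) \<Rightarrow> (nat \<Rightarrow> nat \<Rightarrow> 'w \<Rightarrow> 'w) \<Rightarrow> 'w \<Rightarrow> (nat \<Rightarrow> 'w) set" where
  "tensor_V0 m n sc rho v = {t \<in> tensor_space m n. \<forall>r. t r \<in> V0 m n sc rho v}"

end

theory Submission imports Defs begin

(* The raising operators L_+ kill V_0(\<Lambda>) and L_0 preserves it, so by the commutation
   relations U(L_-) V_0(\<Lambda>) is stable under every E_pq.  It is graded as soon as the highest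
   weight vector v is homogeneous, and is then all of V(\<Lambda>) by irreducibility.
   Homogeneity of v follows from the operator H = \<Sum>_k k E_kk: it acts on v by
   c = \<Sum>_k k \<Lambda>_k, and each lowering operator E_pq (q < p) raises H-eigenvalues by p - q > 0.
   Hence in the module generated by a nonzero homogeneous component of v the c-eigenspace of H
   is spanned by that component, which forces the other component to vanish.
   Finally E_qp (|s> \<otimes> w) = \<delta>_ps |q> \<otimes> w \<plusminus> |s> \<otimes> E_qp w moves every
   |s> \<otimes> U(L_-) V_0(\<Lambda>) into U(L_-) (V \<otimes> V_0(\<Lambda>)). *)

lemma gen_sub_minimal:
  assumes "S \<subseteq> X" "0 \<in> X" "\<And>x y. x \<in> X \<Longrightarrow> y \<in> X \<Longrightarrow> x + y \<in> X"
    and "\<And>c x. x \<in> X \<Longrightarrow> sc c x \<in> X" "\<And>f x. f \<in> ops \<Longrightarrow> x \<in> X \<Longrightarrow> f x \<in> X"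
  shows "gen_sub sc ops S \<subseteq> X"
proof
  fix x assume "x \<in> gen_sub sc ops S"
  then show "x \<in> X" by induction (use assms in blast)+
qed

lemma gen_sub_mono: "ops \<subseteq> ops' \<Longrightarrow> S \<subseteq> S' \<Longrightarrow> gen_sub sc ops S \<subseteq> gen_sub sc ops' S'"
  by (rule gen_sub_minimal) (auto intro: gen_sub.intros)

lemma gen_sub_sum:
  "finite A \<Longrightarrow> (\<And>a. a \<in> A \<Longrightarrow> f a \<in> gen_sub sc ops S) \<Longrightarrow> sum f A \<in> gen_sub sc ops S"
  by (induction A rule: finite_induct) (auto intro: gen_sub.zero gen_sub.add)

lemma gen_sub_subspace: "module sc \<Longrightarrow> module.subspace sc (gen_sub sc ops S)"
  by (simp add: module.subspace_def gen_sub.intros)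

lemma gen_sub_diff:
  "module sc \<Longrightarrow> x \<in> gen_sub sc ops S \<Longrightarrow> y \<in> gen_sub sc ops S \<Longrightarrow> x - y \<in> gen_sub sc ops S"
  by (rule module.subspace_diff[OF _ gen_sub_subspace])

section \<open>Eigenvectors for distinct eigenvalues\<close>

primrec shifted_product ::
  "('a \<Rightarrow> 'b \<Rightarrow> 'b) \<Rightarrow> ('b \<Rightarrow> 'b) \<Rightarrow> 'a list \<Rightarrow> 'b \<Rightarrow> 'b::ab_group_add" where
  "shifted_product scale f [] x = x"
| "shifted_product scale f (d # ds) x =
     f (shifted_product scale f ds x) - scale d (shifted_product scale f ds x)"

context vector_space
begin

lemma shifted_product_eigenvector:
  assumes "Vector_Spaces.linear scale scale f" "f x = d *s x"
  shows "shifted_product scale f ds x = (\<Prod>e\<leftarrow>ds. d - e) *s x"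
proof (induction ds)
  case (Cons e ds)
  have "f ((\<Prod>e\<leftarrow>ds. d - e) *s x) = ((\<Prod>e\<leftarrow>ds. d - e) * d) *s x"
    using assms by (simp add: Vector_Spaces.linear_iff mult.commute)
  then show ?case using Cons by (simp add: scale_left_diff_distrib algebra_simps)
qed simp

lemma shifted_product_linear:
  assumes "Vector_Spaces.linear scale scale f"
  shows "shifted_product scale f ds (c *s x + y)
    = c *s shifted_product scale f ds x + shifted_product scale f ds y"
  by (induction ds)
    (use assms in \<open>simp_all add: Vector_Spaces.linear_iff scale_right_diff_distrib algebra_simps\<close>)

lemma eigenvector_in_span_of_other_eigenvectors:
  assumes f: "Vector_Spaces.linear scale scale f"
    and x: "x \<in> span {y. \<exists>d. d \<noteq> c \<and> f y = d *s y}" and eig: "f x = c *s x"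
  shows "x = 0"
proof -
  \<comment> \<open>Each vector of the span is killed by a product of factors f - d with d \<noteq> c,
     which acts on the c-eigenvector x as a nonzero scalar.\<close>
  have "\<exists>ds. c \<notin> set ds \<and> shifted_product scale f ds x = 0"
    using x
  proof (induction rule: span_induct_alt)
    case base
    show ?case by (rule exI[of _ "[]"]) simp
  next
    case (step a y z)
    then obtain d ds where d: "d \<noteq> c" "f y = d *s y" and ds: "c \<notin> set ds" "shifted_product scale f ds z = 0"
      by blast
    let ?y = "(a * (\<Prod>e\<leftarrow>ds. d - e)) *s y"
    have "shifted_product scale f ds (a *s y + z) = ?y"
      using ds d by (simp add: shifted_product_linear[OF f] shifted_product_eigenvector[OF f d(2)])
    moreover have "f ?y = d *s ?y"
      using d f by (simp add: Vector_Spaces.linear_iff mult.commute)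
    ultimately have "shifted_product scale f (d # ds) (a *s y + z) = 0"
      by simp
    then show ?case using d ds by (intro exI[of _ "d # ds"]) simp
  qed
  then obtain ds where "c \<notin> set ds" "(\<Prod>e\<leftarrow>ds. c - e) *s x = 0"
    using shifted_product_eigenvector[OF f eig] by auto
  moreover have "(\<Prod>e\<leftarrow>ds. c - e) \<noteq> 0" if "c \<notin> set ds" using that by (induction ds) auto
  ultimately show ?thesis by simp
qed

end

section \<open>Invariant and graded submodules of a gl(m|n)-module\<close>

lemma sgn_c_square: "sgn_c k * sgn_c k = 1"
  by (simp add: sgn_c_def power_mult_distrib[symmetric])

lemma sgn_c_double: "sgn_c ((a + a) * b) = 1"
  by (simp add: sgn_c_def power_mult mult_2[symmetric] mult.assoc)

definition L0_idx :: "nat \<Rightarrow> nat \<Rightarrow> (nat \<times> nat) set" where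
  "L0_idx m n = {(p, q). p \<in> idx m n \<and> q \<in> idx m n \<and> par m p = par m q}"

definition Lplus_idx :: "nat \<Rightarrow> nat \<Rightarrow> (nat \<times> nat) set" where
  "Lplus_idx m n = {(p, q). 1 \<le> p \<and> p \<le> m \<and> m < q \<and> q \<le> m + n}"

definition Lminus_idx :: "nat \<Rightarrow> nat \<Rightarrow> (nat \<times> nat) set" where
  "Lminus_idx m n = {(q, p). 1 \<le> p \<and> p \<le> m \<and> m < q \<and> q \<le> m + n}"

lemma par_eq_iff: "par m p = par m q \<longleftrightarrow> (p \<le> m \<longleftrightarrow> q \<le> m)"
  by (simp add: par_def)

lemma L0_ops_eq: "L0_ops m n act = case_prod act ` L0_idx m n"
  unfolding L0_ops_def L0_idx_def by force

lemma Lminus_ops_eq: "Lminus_ops m n act = case_prod act ` Lminus_idx m n"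
  unfolding Lminus_ops_def Lminus_idx_def by force

lemma L_ops_eq: "L_ops m n act = case_prod act ` (idx m n \<times> idx m n)"
  unfolding L_ops_def by force

lemma Lminus_idx_subset: "Lminus_idx m n \<subseteq> idx m n \<times> idx m n"
  by (auto simp: Lminus_idx_def idx_def)

definition lower_idx :: "nat \<Rightarrow> nat \<Rightarrow> (nat \<times> nat) set" where
  "lower_idx m n = {(p, q). p \<in> idx m n \<and> q \<in> idx m n \<and> q < p}"

lemma idx_pair_cases:
  assumes "p \<in> idx m n" "q \<in> idx m n"
  obtains "(p, q) \<in> L0_idx m n" | "(p, q) \<in> Lplus_idx m n" | "(p, q) \<in> Lminus_idx m n"
  using assms by (fastforce simp: L0_idx_def Lplus_idx_def Lminus_idx_def idx_def par_eq_iff)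

locale glmn_rep =
  fixes m n :: nat and sc :: "complex \<Rightarrow> 'w::ab_group_add \<Rightarrow> 'w"
    and rho :: "nat \<Rightarrow> nat \<Rightarrow> 'w \<Rightarrow> 'w" and W0 W1 :: "'w set"
  assumes glmn_module: "glmn_module m n sc rho W0 W1"
begin

sublocale V: vector_space sc
  using glmn_module unfolding glmn_module_def by blast

interpretation VV: vector_space_pair sc sc ..

lemma
  shows W0_subspace: "V.subspace W0" and W1_subspace: "V.subspace W1"
    and W0_inter_W1: "W0 \<inter> W1 = {0}" and graded_decomp: "\<exists>a\<in>W0. \<exists>b\<in>W1. w = a + b"
  using glmn_module unfolding glmn_module_def by blast+

lemma rho_linear: "p \<in> idx m n \<Longrightarrow> q \<in> idx m n \<Longrightarrow> Vector_Spaces.linear sc sc (rho p q)"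
  using glmn_module unfolding glmn_module_def by blast

lemma
  assumes "p \<in> idx m n" "q \<in> idx m n"
  shows rho_add: "rho p q (x + y) = rho p q x + rho p q y"
    and rho_scale: "rho p q (sc c x) = sc c (rho p q x)"
    and rho_zero: "rho p q 0 = 0"
    and rho_sum: "rho p q (sum g A) = (\<Sum>a\<in>A. rho p q (g a))"
  using rho_linear[OF assms] by (simp_all add: VV.linear_add VV.linear_scale VV.linear_0 VV.linear_sum)

lemma rho_homogeneous:
  assumes "p \<in> idx m n" "q \<in> idx m n"
  shows "if par m p = par m q then rho p q ` W0 \<subseteq> W0 \<and> rho p q ` W1 \<subseteq> W1
         else rho p q ` W0 \<subseteq> W1 \<and> rho p q ` W1 \<subseteq> W0"
proof -
  have "\<forall>p\<in>idx m n. \<forall>q\<in>idx m n.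
        if par m p = par m q then rho p q ` W0 \<subseteq> W0 \<and> rho p q ` W1 \<subseteq> W1
        else rho p q ` W0 \<subseteq> W1 \<and> rho p q ` W1 \<subseteq> W0"
    using glmn_module unfolding glmn_module_def by (elim conjE)
  then show ?thesis using assms by blast
qed

lemma rho_bracket:
  assumes "p \<in> idx m n" "q \<in> idx m n" "r \<in> idx m n" "s \<in> idx m n"
  defines "\<epsilon> \<equiv> sgn_c ((par m p + par m q) * (par m r + par m s))"
  shows "rho p q (rho r s w) = (if q = r then rho p s w else 0) - sc \<epsilon> (if p = s then rho r q w else 0)
      + sc \<epsilon> (rho r s (rho p q w))"
proof -
  have "\<forall>p\<in>idx m n. \<forall>q\<in>idx m n. \<forall>r\<in>idx m n. \<forall>s\<in>idx m n. \<forall>w.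
        rho p q (rho r s w)
          - sc (sgn_c ((par m p + par m q) * (par m r + par m s))) (rho r s (rho p q w))
        = (if q = r then rho p s w else 0)
          - sc (sgn_c ((par m p + par m q) * (par m r + par m s)))
               (if p = s then rho r q w else 0)"
    using glmn_module unfolding glmn_module_def by (elim conjE)
  from this[rule_format, OF assms(1-4), of w] show ?thesis
    unfolding \<epsilon>_def by (simp only: diff_eq_eq)
qed

lemma graded_decomp_unique:
  assumes "a \<in> W0" "a' \<in> W0" "b \<in> W1" "b' \<in> W1" "a + b = a' + b'"
  shows "a = a' \<and> b = b'"
proof -
  have "a - a' = b' - b" using assms(5) by (simp add: algebra_simps)
  moreover have "a - a' \<in> W0" "b' - b \<in> W1"
    using assms(1-4) by (simp_all add: V.subspace_diff W0_subspace W1_subspace)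
  ultimately have "a - a' = 0" using W0_inter_W1 by (metis IntI singletonD)
  then show ?thesis using \<open>a - a' = b' - b\<close> by simp
qed

definition rho_invariant :: "'w set \<Rightarrow> bool" where
  "rho_invariant S \<longleftrightarrow> (\<forall>p\<in>idx m n. \<forall>q\<in>idx m n. rho p q ` S \<subseteq> S)"

definition graded :: "'w set \<Rightarrow> bool" where
  "graded S \<longleftrightarrow> (\<forall>w\<in>S. \<exists>a\<in>S \<inter> W0. \<exists>b\<in>S \<inter> W1. w = a + b)"

lemma irreducible_gen_sub_eq_UNIV:
  assumes "glmn_irreducible m n sc rho W0 W1"
    and "rho_invariant (gen_sub sc ops S)" "graded (gen_sub sc ops S)" "x \<in> S" "x \<noteq> 0"
  shows "gen_sub sc ops S = UNIV"
  using assms gen_sub_subspace[OF V.module_axioms, of ops S] gen_sub.base[of x S sc ops]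
  unfolding glmn_irreducible_def rho_invariant_def graded_def by blast

text \<open>No ordering of U(L) is needed: the invariant set below records closure under all E_pq,
  so the brackets produced when E_pq passes a generator from Neg are already available.\<close>

lemma gen_sub_rho_invariant:
  assumes Neg: "Neg \<subseteq> idx m n \<times> idx m n"
    and gens: "\<And>p q x. p \<in> idx m n \<Longrightarrow> q \<in> idx m n \<Longrightarrow> (p, q) \<notin> Neg \<Longrightarrow> x \<in> S \<Longrightarrow>
      rho p q x \<in> gen_sub sc (case_prod rho ` Neg) S"
  shows "rho_invariant (gen_sub sc (case_prod rho ` Neg) S)"
proof -
  let ?G = "gen_sub sc (case_prod rho ` Neg) S"
  have oper: "rho r s y \<in> ?G" if "(r, s) \<in> Neg" "y \<in> ?G" for r s y
    using gen_sub.oper[of "rho r s" "case_prod rho ` Neg" y sc S] that by (simp add: rev_image_eqI)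
  have "?G \<subseteq> {x \<in> ?G. \<forall>p\<in>idx m n. \<forall>q\<in>idx m n. rho p q x \<in> ?G}" (is "_ \<subseteq> ?X")
  proof (rule gen_sub_minimal)
    show "S \<subseteq> ?X"
    proof
      fix x assume x: "x \<in> S"
      then have "x \<in> ?G" by (rule gen_sub.base)
      moreover have "rho p q x \<in> ?G" if "p \<in> idx m n" "q \<in> idx m n" for p q
        using gens[OF that _ x] oper[of p q x] \<open>x \<in> ?G\<close> by blast
      ultimately show "x \<in> ?X" by blast
    qed
    show "0 \<in> ?X"
      by (simp add: rho_zero gen_sub.zero)
    show "x + y \<in> ?X" if "x \<in> ?X" "y \<in> ?X" for x y
      using that by (simp add: rho_add gen_sub.add)
    show "sc c x \<in> ?X" if "x \<in> ?X" for c x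
      using that by (simp add: rho_scale gen_sub.smul)
    show "f x \<in> ?X" if f_Neg: "f \<in> case_prod rho ` Neg" and "x \<in> ?X" for f x
    proof -
      obtain r s where rs: "(r, s) \<in> Neg" and f: "f = rho r s" using f_Neg by auto
      have r: "r \<in> idx m n" and s: "s \<in> idx m n" using rs Neg by auto
      have "rho p q (rho r s x) \<in> ?G" if "p \<in> idx m n" "q \<in> idx m n" for p q
      proof -
        have "rho p s x \<in> ?G" "rho r q x \<in> ?G" "rho r s (rho p q x) \<in> ?G"
          using \<open>x \<in> ?X\<close> that r s oper[OF rs] by blast+
        then show ?thesis unfolding rho_bracket[OF that r s]
          by (intro gen_sub.add gen_sub_diff[OF V.module_axioms] gen_sub.smul) (auto intro: gen_sub.zero)
      qed
      moreover have "rho r s x \<in> ?G" using \<open>x \<in> ?X\<close> rs oper by blast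
      ultimately show ?thesis unfolding f by blast
    qed
  qed
  then show ?thesis unfolding rho_invariant_def by blast
qed

lemma graded_gen_sub:
  assumes ops: "ops \<subseteq> case_prod rho ` (idx m n \<times> idx m n)"
    and gens: "\<And>x. x \<in> S \<Longrightarrow> \<exists>a\<in>gen_sub sc ops S \<inter> W0. \<exists>b\<in>gen_sub sc ops S \<inter> W1. x = a + b"
  shows "graded (gen_sub sc ops S)"
proof -
  let ?G = "gen_sub sc ops S"
  have "?G \<subseteq> {x. \<exists>a\<in>?G \<inter> W0. \<exists>b\<in>?G \<inter> W1. x = a + b}" (is "_ \<subseteq> ?X")
  proof (rule gen_sub_minimal)
    show "S \<subseteq> ?X" using gens by blast
    show "0 \<in> ?X"
      using gen_sub.zero[of sc ops S] V.subspace_0[OF W0_subspace] V.subspace_0[OF W1_subspace]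
      by (intro CollectI bexI[of _ 0]) auto
    show "x + y \<in> ?X" if x: "x \<in> ?X" and y: "y \<in> ?X" for x y
    proof -
      obtain a b a' b' where "a \<in> ?G \<inter> W0" "b \<in> ?G \<inter> W1" "a' \<in> ?G \<inter> W0" "b' \<in> ?G \<inter> W1"
        "x = a + b" "y = a' + b'" using x y by blast
      moreover have "x + y = (a + a') + (b + b')" using calculation by (simp add: algebra_simps)
      ultimately show ?thesis
        by (intro CollectI bexI[of _ "a + a'"] bexI[of _ "b + b'"])
          (auto intro: gen_sub.add V.subspace_add W0_subspace W1_subspace)
    qed
    show "sc c x \<in> ?X" if x: "x \<in> ?X" for c x
    proof -
      obtain a b where "a \<in> ?G \<inter> W0" "b \<in> ?G \<inter> W1" "x = a + b" using x by blast
      then show ?thesis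
        by (intro CollectI bexI[of _ "sc c a"] bexI[of _ "sc c b"])
          (auto intro: gen_sub.smul V.subspace_scale W0_subspace W1_subspace simp: V.scale_right_distrib)
    qed
    show "f x \<in> ?X" if f_ops: "f \<in> ops" and x: "x \<in> ?X" for f x
    proof -
      obtain a b where ab: "a \<in> ?G \<inter> W0" "b \<in> ?G \<inter> W1" "x = a + b" using x by blast
      obtain p q where pq: "p \<in> idx m n" "q \<in> idx m n" and f: "f = rho p q" using f_ops ops by auto
      have fab: "f a \<in> ?G" "f b \<in> ?G" "f x = f a + f b"
        using ab f_ops by (auto intro: gen_sub.oper simp: f rho_add[OF pq])
      show ?thesis
      proof (cases "par m p = par m q")
        case True
        then have "f a \<in> W0" "f b \<in> W1" using rho_homogeneous[OF pq] ab f by auto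
        then show ?thesis using fab by blast
      next
        case False
        then have "f b \<in> W0" "f a \<in> W1" using rho_homogeneous[OF pq] ab f by auto
        moreover have "f x = f b + f a" using fab(3) by (simp add: add.commute)
        ultimately show ?thesis using fab(1,2) by blast
      qed
    qed
  qed
  then show ?thesis unfolding graded_def by blast
qed

lemma graded_gen_sub_homogeneous:
  assumes "ops \<subseteq> case_prod rho ` (idx m n \<times> idx m n)" "S \<subseteq> W0 \<union> W1"
  shows "graded (gen_sub sc ops S)"
proof (rule graded_gen_sub[OF assms(1)])
  fix x assume x: "x \<in> S"
  let ?G = "gen_sub sc ops S"
  have "x \<in> ?G" "0 \<in> ?G" using x by (auto intro: gen_sub.base gen_sub.zero)
  moreover have "0 \<in> W0" "0 \<in> W1" using V.subspace_0 W0_subspace W1_subspace by blast+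
  ultimately show "\<exists>a\<in>?G \<inter> W0. \<exists>b\<in>?G \<inter> W1. x = a + b"
    using assms(2) x by (cases "x \<in> W0") (fastforce intro: bexI[of _ 0])+
qed

section \<open>Homogeneity of the highest weight vector\<close>

definition cartan :: "'w \<Rightarrow> 'w" where
  "cartan x = (\<Sum>k\<in>idx m n. sc (of_nat k) (rho k k x))"

lemma cartan_linear: "Vector_Spaces.linear sc sc cartan"
proof -
  have "cartan (x + y) = cartan x + cartan y" for x y
    unfolding cartan_def by (simp add: rho_add V.scale_right_distrib sum.distrib cong: sum.cong)
  moreover have "cartan (sc c x) = sc c (cartan x)" for c x
    unfolding cartan_def by (simp add: rho_scale V.scale_sum_right mult.commute cong: sum.cong)
  ultimately show ?thesis using V.vector_space_axioms by (simp add: Vector_Spaces.linear_iff)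
qed

lemma cartan_rho:
  assumes p: "p \<in> idx m n" and q: "q \<in> idx m n"
  shows "cartan (rho p q x) = rho p q (cartan x) + sc (of_nat p - of_nat q) (rho p q x)"
proof -
  have "rho k k (rho p q x) = (if k = p then rho p q x else 0) - (if k = q then rho p q x else 0)
      + rho p q (rho k k x)" if "k \<in> idx m n" for k
    using rho_bracket[OF that that p q, of x] by (simp add: sgn_c_double)
  then have "cartan (rho p q x) = (\<Sum>k\<in>idx m n. (if k = p then sc (of_nat k) (rho p q x) else 0)
      - (if k = q then sc (of_nat k) (rho p q x) else 0) + sc (of_nat k) (rho p q (rho k k x)))"
    unfolding cartan_def by (intro sum.cong) (simp_all add: V.scale_right_distrib V.scale_right_diff_distrib)
  also have "\<dots> = sc (of_nat p) (rho p q x) - sc (of_nat q) (rho p q x) + rho p q (cartan x)"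
    using p q by (simp add: sum.distrib sum_subtractf cartan_def rho_sum rho_scale idx_def)
  finally show ?thesis by (simp add: V.scale_left_diff_distrib)
qed

lemma cartan_eigenvector_rho:
  assumes "p \<in> idx m n" "q \<in> idx m n" "cartan x = sc c x"
  shows "cartan (rho p q x) = sc (c + of_nat p - of_nat q) (rho p q x)"
  using assms by (simp add: cartan_rho rho_scale V.scale_left_distrib add_diff_eq[symmetric])

lemma cartan_weight_vector:
  assumes "\<And>p. p \<in> idx m n \<Longrightarrow> rho p p x = sc (Lam p) x"
  shows "cartan x = sc (\<Sum>k\<in>idx m n. of_nat k * Lam k) x"
  unfolding cartan_def using assms by (simp add: V.scale_sum_left cong: sum.cong)

lemma rho_graded_components:
  assumes pq: "p \<in> idx m n" "q \<in> idx m n" and ab: "a \<in> W0" "b \<in> W1"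
    and eig: "rho p q (a + b) = sc c (a + b)" and "par m p = par m q \<or> c = 0"
  shows "rho p q a = sc c a \<and> rho p q b = sc c b"
proof (cases "par m p = par m q")
  case True
  then have "rho p q a \<in> W0" "rho p q b \<in> W1" using rho_homogeneous[OF pq] ab by auto
  moreover have "sc c a \<in> W0" "sc c b \<in> W1" using ab V.subspace_scale W0_subspace W1_subspace by blast+
  ultimately show ?thesis
    using graded_decomp_unique eig by (simp add: rho_add[OF pq] V.scale_right_distrib)
next
  case False
  then have "rho p q b \<in> W0" "rho p q a \<in> W1" "c = 0" using rho_homogeneous[OF pq] ab assms(6) by auto
  moreover have "0 \<in> W0" "0 \<in> W1" using V.subspace_0 W0_subspace W1_subspace by blast+
  ultimately show ?thesis
    using graded_decomp_unique[of "rho p q b" 0 "rho p q a" 0] eig by (simp add: rho_add[OF pq] add.commute)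
qed

lemma cartan_eigenvector_lowering:
  assumes "p \<in> idx m n" "q \<in> idx m n" "q < p" "cartan z = sc (c + of_nat j) z"
  shows "cartan (rho p q z) = sc (c + of_nat (j + (p - q))) (rho p q z)"
proof -
  have "c + of_nat j + of_nat p - of_nat q = c + of_nat (j + (p - q))"
    using assms(3) by (simp add: of_nat_diff)
  then show ?thesis using cartan_eigenvector_rho[OF assms(1,2,4)] by simp
qed

definition higher_eigenvectors :: "complex \<Rightarrow> 'w set" where
  "higher_eigenvectors c = {y. \<exists>j::nat. 0 < j \<and> cartan y = sc (c + of_nat j) y}"

lemma gen_sub_lowering_eq_UNIV:
  assumes irr: "glmn_irreducible m n sc rho W0 W1"
    and a: "a \<in> W0 \<union> W1" "a \<noteq> 0"
    and diag: "\<And>p. p \<in> idx m n \<Longrightarrow> rho p p a = sc (Lam p) a"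
    and raise: "\<And>p q. p \<in> idx m n \<Longrightarrow> q \<in> idx m n \<Longrightarrow> p < q \<Longrightarrow> rho p q a = 0"
  shows "gen_sub sc (case_prod rho ` lower_idx m n) {a} = UNIV"
proof (rule irreducible_gen_sub_eq_UNIV[OF irr _ _ _ a(2)])
  let ?G = "gen_sub sc (case_prod rho ` lower_idx m n) {a}"
  show "rho_invariant ?G"
  proof (rule gen_sub_rho_invariant)
    show "lower_idx m n \<subseteq> idx m n \<times> idx m n" unfolding lower_idx_def by auto
    fix p q y assume pq: "p \<in> idx m n" "q \<in> idx m n" and "(p, q) \<notin> lower_idx m n" "y \<in> {a}"
    then consider "p = q" "y = a" | "p < q" "y = a" unfolding lower_idx_def by fastforce
    then show "rho p q y \<in> ?G"
    proof cases
      case 1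
      then show ?thesis using diag pq by (simp add: gen_sub.smul gen_sub.base)
    next
      case 2
      then show ?thesis using raise pq by (simp add: gen_sub.zero)
    qed
  qed
  show "graded ?G"
    by (rule graded_gen_sub_homogeneous) (use a(1) in \<open>auto simp: lower_idx_def\<close>)
qed simp

lemma gen_sub_lowering_subset_span:
  assumes a: "cartan a = sc c a"
  shows "gen_sub sc (case_prod rho ` lower_idx m n) {a} \<subseteq> V.span (insert a (higher_eigenvectors c))"
proof (rule gen_sub_minimal)
  let ?H = "higher_eigenvectors c"
  show "{a} \<subseteq> V.span (insert a ?H)" by (simp add: V.span_base)
  show "0 \<in> V.span (insert a ?H)" by (rule V.span_zero)
  show "x + y \<in> V.span (insert a ?H)" if "x \<in> V.span (insert a ?H)" "y \<in> V.span (insert a ?H)" for x y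
    using that by (rule V.span_add)
  show "sc k x \<in> V.span (insert a ?H)" if "x \<in> V.span (insert a ?H)" for k x
    using that by (rule V.span_scale)
  show "f y \<in> V.span (insert a ?H)" if f: "f \<in> case_prod rho ` lower_idx m n"
    and y: "y \<in> V.span (insert a ?H)" for f y
  proof -
    obtain p q where pq: "p \<in> idx m n" "q \<in> idx m n" "q < p" and f: "f = rho p q"
      using f unfolding lower_idx_def by auto
    have "cartan (rho p q a) = sc (c + of_nat (0 + (p - q))) (rho p q a)"
      by (rule cartan_eigenvector_lowering[OF pq]) (simp add: a)
    moreover have "0 < 0 + (p - q)" using pq(3) by simp
    ultimately have "rho p q a \<in> ?H" unfolding higher_eigenvectors_def by blast
    moreover have "rho p q z \<in> ?H" if z: "z \<in> ?H" for z
    proof -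
      obtain j where j: "0 < j" "cartan z = sc (c + of_nat j) z"
        using z unfolding higher_eigenvectors_def by blast
      then have "0 < j + (p - q)" by simp
      with cartan_eigenvector_lowering[OF pq j(2)] show ?thesis
        unfolding higher_eigenvectors_def by blast
    qed
    ultimately have "V.span (rho p q ` insert a ?H) \<subseteq> V.span (insert a ?H)"
      by (intro V.span_mono) blast
    moreover have "f y \<in> V.span (rho p q ` insert a ?H)"
      unfolding f VV.linear_span_image[OF rho_linear[OF pq(1,2)]] using y by (rule imageI)
    ultimately show ?thesis by blast
  qed
qed

lemma cartan_eigenvector_multiple_of_hw:
  assumes irr: "glmn_irreducible m n sc rho W0 W1"
    and a: "a \<in> W0 \<union> W1" "a \<noteq> 0"
    and diag: "\<And>p. p \<in> idx m n \<Longrightarrow> rho p p a = sc (Lam p) a"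
    and raise: "\<And>p q. p \<in> idx m n \<Longrightarrow> q \<in> idx m n \<Longrightarrow> p < q \<Longrightarrow> rho p q a = 0"
    and x: "cartan x = sc (\<Sum>k\<in>idx m n. of_nat k * Lam k) x"
  shows "\<exists>c. x = sc c a"
proof -
  define c0 where "c0 = (\<Sum>k\<in>idx m n. of_nat k * Lam k)"
  have a_eig: "cartan a = sc c0 a" unfolding c0_def by (rule cartan_weight_vector[OF diag])
  have "x \<in> V.span (insert a (higher_eigenvectors c0))"
    using gen_sub_lowering_eq_UNIV[OF irr a diag raise] gen_sub_lowering_subset_span[OF a_eig] by blast
  then obtain c where c: "x - sc c a \<in> V.span (higher_eigenvectors c0)"
    using V.span_breakdown_eq by blast
  have "cartan (x - sc c a) = sc c0 (x - sc c a)"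
    using x a_eig cartan_linear unfolding c0_def
    by (simp add: VV.linear_diff VV.linear_scale V.scale_right_diff_distrib mult.commute)
  moreover have "higher_eigenvectors c0 \<subseteq> {y. \<exists>d. d \<noteq> c0 \<and> cartan y = sc d y}"
  proof
    fix y assume "y \<in> higher_eigenvectors c0"
    then obtain j :: nat where "0 < j" "cartan y = sc (c0 + of_nat j) y"
      unfolding higher_eigenvectors_def by blast
    then show "y \<in> {y. \<exists>d. d \<noteq> c0 \<and> cartan y = sc d y}"
      by (intro CollectI exI[of _ "c0 + of_nat j"]) simp
  qed
  ultimately have "x - sc c a = 0"
    using V.eigenvector_in_span_of_other_eigenvectors[OF cartan_linear] c V.span_mono by blast
  then show ?thesis by auto
qed

text \<open>The definition of hw_vector does not ask v to be homogeneous; irreducibility forces it.\<close>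

lemma hw_vector_homogeneous:
  assumes irr: "glmn_irreducible m n sc rho W0 W1" and hw: "hw_vector m n sc rho Lam v"
  shows "v \<in> W0 \<union> W1"
proof -
  obtain a b where ab: "a \<in> W0" "b \<in> W1" "v = a + b" using graded_decomp by blast
  have diag: "rho p p a = sc (Lam p) a \<and> rho p p b = sc (Lam p) b" if p: "p \<in> idx m n" for p
  proof (rule rho_graded_components[OF p p ab(1,2)])
    show "rho p p (a + b) = sc (Lam p) (a + b)" using hw p unfolding ab(3)[symmetric] hw_vector_def by blast
  qed simp
  show ?thesis
  proof (cases "a = 0")
    case True
    then show ?thesis using ab by simp
  next
    case False
    have raise: "rho p q a = 0" if pq: "p \<in> idx m n" "q \<in> idx m n" "p < q" for p q
    proof -
      have "rho p q (a + b) = sc 0 (a + b)" using hw pq unfolding ab(3)[symmetric] hw_vector_def by simp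
      from rho_graded_components[OF pq(1,2) ab(1,2) this] show ?thesis by simp
    qed
    have "cartan b = sc (\<Sum>k\<in>idx m n. of_nat k * Lam k) b"
      using diag by (intro cartan_weight_vector) blast
    moreover have "a \<in> W0 \<union> W1" using ab(1) by simp
    moreover have "rho p p a = sc (Lam p) a" if "p \<in> idx m n" for p using diag[OF that] by simp
    ultimately have "\<exists>c. b = sc c a"
      using cartan_eigenvector_multiple_of_hw[OF irr _ False _ raise] by blast
    then have "b \<in> W0 \<inter> W1" using ab V.subspace_scale[OF W0_subspace] by blast
    then show ?thesis using ab W0_inter_W1 by simp
  qed
qed

section \<open>U(L_-) V_0(\<Lambda>) is the whole module\<close>

lemma V0_Lplus_zero:
  assumes hw: "hw_vector m n sc rho Lam v" and x: "x \<in> V0 m n sc rho v"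
    and pq: "(p, q) \<in> Lplus_idx m n"
  shows "rho p q x = 0"
proof -
  have Lplus_idx: "p \<in> idx m n" "q \<in> idx m n" "p < q" if "(p, q) \<in> Lplus_idx m n" for p q
    using that by (simp_all add: Lplus_idx_def idx_def)
  have "V0 m n sc rho v \<subseteq> {x. \<forall>p q. (p, q) \<in> Lplus_idx m n \<longrightarrow> rho p q x = 0}" (is "_ \<subseteq> ?K")
    unfolding V0_def L0_ops_eq
  proof (rule gen_sub_minimal)
    show "{v} \<subseteq> ?K"
      using hw Lplus_idx unfolding hw_vector_def by blast
    show "0 \<in> ?K" using Lplus_idx by (simp add: rho_zero)
    show "x + y \<in> ?K" if "x \<in> ?K" "y \<in> ?K" for x y
      using that Lplus_idx by (simp add: rho_add)
    show "sc c x \<in> ?K" if "x \<in> ?K" for c x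
      using that Lplus_idx by (simp add: rho_scale)
    show "f y \<in> ?K" if f: "f \<in> case_prod rho ` L0_idx m n" and y: "y \<in> ?K" for f y
    proof (intro CollectI allI impI)
      fix p q assume pq: "(p, q) \<in> Lplus_idx m n"
      obtain r s where rs: "(r, s) \<in> L0_idx m n" and f: "f = rho r s" using f by auto
      have r: "r \<in> idx m n" and s: "s \<in> idx m n" using rs by (simp_all add: L0_idx_def)
      have "q = r \<Longrightarrow> (p, s) \<in> Lplus_idx m n" "p = s \<Longrightarrow> (r, q) \<in> Lplus_idx m n"
        using pq rs by (auto simp: Lplus_idx_def L0_idx_def idx_def par_eq_iff)
      then have "(if q = r then rho p s y else 0) = 0" "(if p = s then rho r q y else 0) = 0"
        "rho p q y = 0" using y pq by auto
      then show "rho p q (f y) = 0"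
        unfolding f rho_bracket[OF Lplus_idx(1,2)[OF pq] r s] by (simp add: rho_zero[OF r s])
    qed
  qed
  then show ?thesis using x pq by blast
qed

lemma Lminus_V0_eq_UNIV:
  assumes irr: "glmn_irreducible m n sc rho W0 W1" and hw: "hw_vector m n sc rho Lam v"
  shows "gen_sub sc (Lminus_ops m n rho) (V0 m n sc rho v) = UNIV"
proof -
  let ?V0 = "V0 m n sc rho v"
  let ?G = "gen_sub sc (case_prod rho ` Lminus_idx m n) ?V0"
  have V0_graded: "graded ?V0"
    unfolding V0_def L0_ops_eq
    using hw_vector_homogeneous[OF irr hw] by (intro graded_gen_sub_homogeneous) (auto simp: L0_idx_def)
  have V0_G: "?V0 \<subseteq> ?G" by (auto intro: gen_sub.base)
  have v: "v \<in> ?V0" "v \<noteq> 0"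
    using hw unfolding V0_def hw_vector_def by (auto intro: gen_sub.base)
  have "?G = UNIV"
  proof (rule irreducible_gen_sub_eq_UNIV[OF irr _ _ v])
    show "rho_invariant ?G"
    proof (rule gen_sub_rho_invariant[OF Lminus_idx_subset])
      fix p q x assume pq: "p \<in> idx m n" "q \<in> idx m n" "(p, q) \<notin> Lminus_idx m n" and x: "x \<in> ?V0"
      from pq(1,2) show "rho p q x \<in> ?G"
      proof (cases rule: idx_pair_cases)
        case 1
        then have "rho p q \<in> L0_ops m n rho" unfolding L0_ops_eq by (rule rev_image_eqI) simp
        then have "rho p q x \<in> ?V0" using x unfolding V0_def by (rule gen_sub.oper)
        then show ?thesis using V0_G by blast
      next
        case 2
        then show ?thesis using V0_Lplus_zero[OF hw x] by (simp add: gen_sub.zero)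
      qed (use pq(3) in blast)
    qed
    show "graded ?G"
    proof (rule graded_gen_sub)
      show "case_prod rho ` Lminus_idx m n \<subseteq> case_prod rho ` (idx m n \<times> idx m n)"
        using Lminus_idx_subset by blast
      show "\<exists>a\<in>?G \<inter> W0. \<exists>b\<in>?G \<inter> W1. x = a + b" if "x \<in> ?V0" for x
        using V0_graded that V0_G unfolding graded_def by blast
    qed
  qed
  then show ?thesis unfolding Lminus_ops_eq .
qed

end

section \<open>The tensor product with the vector module\<close>

definition pure_tensor :: "nat \<Rightarrow> 'w \<Rightarrow> nat \<Rightarrow> 'w::zero" where
  "pure_tensor s w = (\<lambda>r. if r = s then w else 0)"

lemma pure_tensor_0: "pure_tensor s 0 = 0"
  by (simp add: pure_tensor_def fun_eq_iff)

lemma pure_tensor_add: "pure_tensor s (x + y :: 'w::monoid_add) = pure_tensor s x + pure_tensor s y"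
  by (simp add: pure_tensor_def fun_eq_iff)

lemma sum_fun_apply: "(\<Sum>s\<in>A. g s) r = (\<Sum>s\<in>A. g s r)"
  by (induction A rule: infinite_finite_induct) simp_all

lemma tensor_space_eq_sum_pure_tensor:
  assumes "t \<in> tensor_space m n"
  shows "t = (\<Sum>s\<in>idx m n. pure_tensor s (t s))"
proof
  fix r
  have "finite (idx m n)" by (simp add: idx_def)
  then show "t r = (\<Sum>s\<in>idx m n. pure_tensor s (t s)) r"
    using assms by (simp add: sum_fun_apply pure_tensor_def tensor_space_def)
qed

context glmn_rep
begin

lemma tens_sc_module: "module (tens_sc sc)"
  by unfold_locales (simp_all add: tens_sc_def fun_eq_iff V.scale_right_distrib V.scale_left_distrib)

lemma tens_sc_pure_tensor: "tens_sc sc c (pure_tensor s w) = pure_tensor s (sc c w)"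
  by (simp add: pure_tensor_def tens_sc_def fun_eq_iff)

lemma tens_act_pure_tensor:
  assumes "p \<in> idx m n" "q \<in> idx m n" "s \<in> idx m n"
  shows "tens_act m n sc rho p q (pure_tensor s w) = (if s = q then pure_tensor p w else 0)
      + pure_tensor s (sc (sgn_c ((par m p + par m q) * par m s)) (rho p q w))"
  using assms by (auto simp: tens_act_def pure_tensor_def fun_eq_iff rho_zero)

lemma pure_tensor_in_Lminus_gen_sub:
  assumes w: "w \<in> gen_sub sc (Lminus_ops m n rho) (V0 m n sc rho v)" and s: "s \<in> idx m n"
  shows "pure_tensor s w \<in> gen_sub (tens_sc sc) (Lminus_ops m n (tens_act m n sc rho)) (tensor_V0 m n sc rho v)"
proof -
  let ?T = "gen_sub (tens_sc sc) (Lminus_ops m n (tens_act m n sc rho)) (tensor_V0 m n sc rho v)"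
  have "gen_sub sc (Lminus_ops m n rho) (V0 m n sc rho v) \<subseteq> {w. \<forall>s\<in>idx m n. pure_tensor s w \<in> ?T}"
    (is "_ \<subseteq> ?X")
  proof (rule gen_sub_minimal)
    have "0 \<in> V0 m n sc rho v" unfolding V0_def by (rule gen_sub.zero)
    then have "pure_tensor s w \<in> tensor_V0 m n sc rho v" if "w \<in> V0 m n sc rho v" "s \<in> idx m n" for s w
      using that by (auto simp: tensor_V0_def tensor_space_def pure_tensor_def)
    then show "V0 m n sc rho v \<subseteq> ?X" by (blast intro: gen_sub.base)
    show "0 \<in> ?X" by (simp add: pure_tensor_0 gen_sub.zero)
    show "x + y \<in> ?X" if "x \<in> ?X" "y \<in> ?X" for x y
      using that by (simp add: pure_tensor_add gen_sub.add)
    show "sc c x \<in> ?X" if "x \<in> ?X" for c x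
      using that by (simp add: tens_sc_pure_tensor[symmetric] gen_sub.smul)
    show "f y \<in> ?X" if f: "f \<in> Lminus_ops m n rho" and y: "y \<in> ?X" for f y
    proof (intro CollectI ballI)
      fix s assume s: "s \<in> idx m n"
      obtain q p where qp: "(q, p) \<in> Lminus_idx m n" and f: "f = rho q p"
        using f unfolding Lminus_ops_eq by auto
      have q: "q \<in> idx m n" and p: "p \<in> idx m n" using qp Lminus_idx_subset by auto
      define \<epsilon> where "\<epsilon> = sgn_c ((par m q + par m p) * par m s)"
      have "tens_act m n sc rho q p (pure_tensor s y) - (if s = p then pure_tensor q y else 0)
          = pure_tensor s (sc \<epsilon> (f y))"
        by (simp add: tens_act_pure_tensor[OF q p s] f \<epsilon>_def)
      then have eq: "pure_tensor s (f y)
          = tens_sc sc \<epsilon> (tens_act m n sc rho q p (pure_tensor s y) - (if s = p then pure_tensor q y else 0))"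
        using sgn_c_square[of "(par m q + par m p) * par m s"] by (simp add: tens_sc_pure_tensor \<epsilon>_def)
      have "tens_act m n sc rho q p \<in> Lminus_ops m n (tens_act m n sc rho)"
        using qp unfolding Lminus_ops_eq by (rule rev_image_eqI) simp
      moreover have "pure_tensor s y \<in> ?T" "(if s = p then pure_tensor q y else 0) \<in> ?T"
        using y s q by (simp_all add: gen_sub.zero)
      ultimately show "pure_tensor s (f y) \<in> ?T"
        unfolding eq by (intro gen_sub.smul gen_sub_diff[OF tens_sc_module] gen_sub.oper[of "tens_act m n sc rho q p"])
    qed
  qed
  then show ?thesis using w s by blast
qed

lemma tensor_space_subset_Lminus_gen_sub:
  assumes irr: "glmn_irreducible m n sc rho W0 W1" and hw: "hw_vector m n sc rho Lam v"
  shows "tensor_space m n \<subseteq> gen_sub (tens_sc sc) (Lminus_ops m n (tens_act m n sc rho)) (tensor_V0 m n sc rho v)"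
proof
  fix t :: "nat \<Rightarrow> 'w" assume "t \<in> tensor_space m n"
  then have "t = (\<Sum>s\<in>idx m n. pure_tensor s (t s))" by (rule tensor_space_eq_sum_pure_tensor)
  also have "\<dots> \<in> gen_sub (tens_sc sc) (Lminus_ops m n (tens_act m n sc rho)) (tensor_V0 m n sc rho v)"
    using Lminus_V0_eq_UNIV[OF irr hw]
    by (intro gen_sub_sum pure_tensor_in_Lminus_gen_sub) (simp_all add: idx_def)
  finally show "t \<in> \<dots>" .
qed

lemma gen_sub_L_subset_tensor_space:
  "gen_sub (tens_sc sc) (L_ops m n (tens_act m n sc rho)) (tensor_V0 m n sc rho v) \<subseteq> tensor_space m n"
proof (rule gen_sub_minimal)
  show "f x \<in> tensor_space m n" if "f \<in> L_ops m n (tens_act m n sc rho)" for f x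
    using that by (auto simp: L_ops_def tensor_space_def tens_act_def)
qed (auto simp: tensor_V0_def tensor_space_def tens_sc_def)

end

theorem lemma7:
  fixes m n :: nat
    and sc :: "complex \<Rightarrow> 'w::ab_group_add \<Rightarrow> 'w"
    and rho :: "nat \<Rightarrow> nat \<Rightarrow> 'w \<Rightarrow> 'w"
    and W0 W1 :: "'w set"
    and Lam :: "nat \<Rightarrow> complex"
    and v :: 'w
  assumes "glmn_module m n sc rho W0 W1"
    and "fin_dim sc"
    and "glmn_irreducible m n sc rho W0 W1"
    and "hw_vector m n sc rho Lam v"
  shows "gen_sub (tens_sc sc) (L_ops m n (tens_act m n sc rho)) (tensor_V0 m n sc rho v)
           = tensor_space m n
       \<and> gen_sub (tens_sc sc) (Lminus_ops m n (tens_act m n sc rho)) (tensor_V0 m n sc rho v)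
           = tensor_space m n"
proof -
  interpret glmn_rep m n sc rho W0 W1 by unfold_locales (fact assms(1))
  let ?TL = "gen_sub (tens_sc sc) (L_ops m n (tens_act m n sc rho)) (tensor_V0 m n sc rho v)"
  let ?TM = "gen_sub (tens_sc sc) (Lminus_ops m n (tens_act m n sc rho)) (tensor_V0 m n sc rho v)"
  have "tensor_space m n \<subseteq> ?TM"
    by (rule tensor_space_subset_Lminus_gen_sub[OF assms(3,4)])
  moreover have "?TM \<subseteq> ?TL"
    unfolding Lminus_ops_eq L_ops_eq by (intro gen_sub_mono image_mono Lminus_idx_subset order_refl)
  moreover have "?TL \<subseteq> tensor_space m n"
    by (rule gen_sub_L_subset_tensor_space)
  ultimately show ?thesis by blast
qed

end
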